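(* Let $G$ be a $k$-monotone bipartite $\epsilon$-expander with ordered bipartition $A=(v_1,\dots,v_n)$ and $B=(w_1,\dots,w_m)$ (so $n=m$). Let $G'$ be the graph with $V(G')=V(G)$ and $E(G')=\{v_iw_j,\ v_jw_i : v_iw_j\in E(G)\}$. Then $G'$ is a two-sided $2k$-monotone bipartite $\epsilon$-expander (with respect to the same ordered bipartition).
   Context: For $\epsilon\in(0,1]$, a bipartite graph $G$ with bipartition $A,B$ is a bipartite $\epsilon$-expander if $|A|=|B|$ and $|N(S)|\geq(1+\epsilon)|S|$ for every $S\subset A$ with $|S|\leq|A|/2$, where $N(S)$ is the set of vertices adjacent to some vertex of $S$. It is a two-sided bipartite $\epsilon$-expander if additionally $|N(T)|\geq(1+\epsilon)|T|$ for every $T\subset B$ with $|T|\leq|B|/2$. For a bipartite graph with ordered colour classes $(v_1,\dots,v_n)$ and $(w_1,\dots,w_m)$, edges $v_iw_j$ and $v_kw_\ell$ cross if $i<k$ and $\ell<j$; a matching is monotone if no two of its edges cross; the graph is $d$-monotone if its edge set is the union of $d$ monotone matchings. *)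

theory Defs
  imports Complex_Main
begin

text \<open>A bipartite graph with ordered colour classes A = (v_0,...,v_{n-1}) and
  B = (w_0,...,w_{m-1}) is represented by its edge set E :: (nat \<times> nat) set,
  where (i,j) \<in> E means that v_i w_j is an edge; we require E \<subseteq> {..<n} \<times> {..<m}.\<close>

definition bip_graph :: "nat \<Rightarrow> nat \<Rightarrow> (nat \<times> nat) set \<Rightarrow> bool" where
  "bip_graph n m E \<longleftrightarrow> E \<subseteq> {..<n} \<times> {..<m}"

definition nbhdA :: "(nat \<times> nat) set \<Rightarrow> nat set \<Rightarrow> nat set" where
  "nbhdA E S = {j. \<exists>i\<in>S. (i, j) \<in> E}"

definition nbhdB :: "(nat \<times> nat) set \<Rightarrow> nat set \<Rightarrow> nat set" where
  "nbhdB E T = {i. \<exists>j\<in>T. (i, j) \<in> E}"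

definition bip_expander :: "real \<Rightarrow> nat \<Rightarrow> nat \<Rightarrow> (nat \<times> nat) set \<Rightarrow> bool" where
  "bip_expander \<epsilon> n m E \<longleftrightarrow> bip_graph n m E \<and> n = m \<and>
     (\<forall>S. S \<subseteq> {..<n} \<and> real (card S) \<le> real n / 2 \<longrightarrow>
          real (card (nbhdA E S)) \<ge> (1 + \<epsilon>) * real (card S))"

definition two_sided_bip_expander :: "real \<Rightarrow> nat \<Rightarrow> nat \<Rightarrow> (nat \<times> nat) set \<Rightarrow> bool" where
  "two_sided_bip_expander \<epsilon> n m E \<longleftrightarrow> bip_expander \<epsilon> n m E \<and>
     (\<forall>T. T \<subseteq> {..<m} \<and> real (card T) \<le> real m / 2 \<longrightarrow>
          real (card (nbhdB E T)) \<ge> (1 + \<epsilon>) * real (card T))"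

definition edges_cross :: "nat \<times> nat \<Rightarrow> nat \<times> nat \<Rightarrow> bool" where
  "edges_cross e f \<longleftrightarrow> fst e < fst f \<and> snd f < snd e"

definition matching :: "(nat \<times> nat) set \<Rightarrow> bool" where
  "matching M \<longleftrightarrow> (\<forall>e\<in>M. \<forall>f\<in>M. e \<noteq> f \<longrightarrow> fst e \<noteq> fst f \<and> snd e \<noteq> snd f)"

definition monotone_matching :: "(nat \<times> nat) set \<Rightarrow> bool" where
  "monotone_matching M \<longleftrightarrow> matching M \<and> (\<forall>e\<in>M. \<forall>f\<in>M. \<not> edges_cross e f)"

definition d_monotone :: "nat \<Rightarrow> (nat \<times> nat) set \<Rightarrow> bool" where
  "d_monotone d E \<longleftrightarrow>
     (\<exists>Ms :: nat \<Rightarrow> (nat \<times> nat) set. (\<forall>t<d. monotone_matching (Ms t)) \<and> E = (\<Union>t<d. Ms t))"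

definition symmetrise :: "(nat \<times> nat) set \<Rightarrow> (nat \<times> nat) set" where
  "symmetrise E = E \<union> {(j, i) | i j. (i, j) \<in> E}"

end

theory Submission
  imports Defs
begin

text \<open>Swapping the two sides maps E onto its mirror image, which is a union of the mirrored
  monotone matchings; so E and its mirror together need 2k matchings. Symmetrising only adds
  edges, and the B-side neighbourhood of T in the symmetrised graph contains the A-side
  neighbourhood of T in E, so both expansion conditions follow from that of E.\<close>

lemma symmetrise_eq: "symmetrise E = E \<union> prod.swap ` E"
  unfolding symmetrise_def by force

lemma monotone_matching_swap:
  assumes "monotone_matching M"
  shows "monotone_matching (prod.swap ` M)"
  using assms unfolding monotone_matching_def matching_def edges_cross_def
  by (auto simp: prod.swap_def)

lemma d_monotone_swap:
  assumes "d_monotone d E"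
  shows "d_monotone d (prod.swap ` E)"
proof -
  obtain Ms where "\<forall>t<d. monotone_matching (Ms t)" and "E = (\<Union>t<d. Ms t)"
    using assms unfolding d_monotone_def by blast
  then have "(\<forall>t<d. monotone_matching (prod.swap ` Ms t)) \<and> prod.swap ` E = (\<Union>t<d. prod.swap ` Ms t)"
    by (auto simp: monotone_matching_swap)
  then show ?thesis
    unfolding d_monotone_def by (intro exI[of _ "\<lambda>t. prod.swap ` Ms t"]) simp
qed

lemma d_monotone_Un:
  assumes "d_monotone a E" and "d_monotone b F"
  shows "d_monotone (a + b) (E \<union> F)"
proof -
  obtain Ms where Ms: "\<forall>t<a. monotone_matching (Ms t)" and E: "E = (\<Union>t<a. Ms t)"
    using assms(1) unfolding d_monotone_def by blast
  obtain Ns where Ns: "\<forall>t<b. monotone_matching (Ns t)" and F: "F = (\<Union>t<b. Ns t)"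
    using assms(2) unfolding d_monotone_def by blast
  define Ls where "Ls t = (if t < a then Ms t else Ns (t - a))" for t
  have "\<forall>t<a + b. monotone_matching (Ls t)"
    using Ms Ns by (auto simp: Ls_def)
  moreover have "E \<union> F = (\<Union>t<a + b. Ls t)"
  proof -
    have "x \<in> (\<lambda>t. t + a) ` {..<b}" if "a \<le> x" "x < a + b" for x
      using that by (intro image_eqI[of _ _ "x - a"]) auto
    then have "{..<a + b} = {..<a} \<union> (\<lambda>t. t + a) ` {..<b}"
      by (auto simp: not_less) (meson not_less)
    moreover have "(\<Union>t<a. Ls t) = E" and "(\<Union>t\<in>(\<lambda>t. t + a) ` {..<b}. Ls t) = F"
      by (auto simp: E F Ls_def)
    ultimately show ?thesis
      by (simp only: UN_Un)
  qed
  ultimately show ?thesis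
    unfolding d_monotone_def by blast
qed

lemma d_monotone_symmetrise:
  assumes "d_monotone k E"
  shows "d_monotone (2 * k) (symmetrise E)"
  using d_monotone_Un[OF assms d_monotone_swap[OF assms]]
  by (simp add: symmetrise_eq mult_2)

lemma nbhdA_mono: "E \<subseteq> F \<Longrightarrow> nbhdA E S \<subseteq> nbhdA F S"
  unfolding nbhdA_def by blast

lemma nbhdA_subset_nbhdB_symmetrise: "nbhdA E T \<subseteq> nbhdB (symmetrise E) T"
  unfolding nbhdA_def nbhdB_def symmetrise_def by blast

lemma bip_graph_symmetrise: "bip_graph n n E \<Longrightarrow> bip_graph n n (symmetrise E)"
  unfolding bip_graph_def symmetrise_def by blast

lemma card_nbhdA_le: "bip_graph n m F \<Longrightarrow> X \<subseteq> nbhdA F S \<Longrightarrow> card X \<le> card (nbhdA F S)"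
  unfolding bip_graph_def nbhdA_def
  by (rule card_mono[OF finite_subset[of _ "{..<m}"]]) auto

lemma card_nbhdB_le: "bip_graph n m F \<Longrightarrow> X \<subseteq> nbhdB F T \<Longrightarrow> card X \<le> card (nbhdB F T)"
  unfolding bip_graph_def nbhdB_def
  by (rule card_mono[OF finite_subset[of _ "{..<n}"]]) auto

lemma two_sided_bip_expander_symmetrise:
  assumes "bip_expander \<epsilon> n m E"
  shows "two_sided_bip_expander \<epsilon> n m (symmetrise E)"
proof -
  have nm: "n = m" and G: "bip_graph n n E"
    and expand: "\<And>S. S \<subseteq> {..<n} \<Longrightarrow> real (card S) \<le> real n / 2 \<Longrightarrow>
        (1 + \<epsilon>) * real (card S) \<le> real (card (nbhdA E S))"
    using assms unfolding bip_expander_def by auto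
  have G': "bip_graph n n (symmetrise E)"
    using G by (rule bip_graph_symmetrise)
  have "E \<subseteq> symmetrise E"
    by (simp add: symmetrise_eq)
  then have A_side: "card (nbhdA E S) \<le> card (nbhdA (symmetrise E) S)" for S
    using card_nbhdA_le[OF G' nbhdA_mono] by blast
  have B_side: "card (nbhdA E T) \<le> card (nbhdB (symmetrise E) T)" for T
    using card_nbhdB_le[OF G' nbhdA_subset_nbhdB_symmetrise] .
  show ?thesis
    unfolding two_sided_bip_expander_def bip_expander_def
  proof (intro conjI allI impI)
    fix S assume "S \<subseteq> {..<n} \<and> real (card S) \<le> real n / 2"
    then show "(1 + \<epsilon>) * real (card S) \<le> real (card (nbhdA (symmetrise E) S))"
      using expand[of S] A_side[of S] by (smt (verit) of_nat_mono)
  next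
    fix T assume "T \<subseteq> {..<m} \<and> real (card T) \<le> real m / 2"
    then show "(1 + \<epsilon>) * real (card T) \<le> real (card (nbhdB (symmetrise E) T))"
      using expand[of T] B_side[of T] nm by (smt (verit) of_nat_mono)
  qed (use G' nm in auto)
qed

theorem lemma6:
  fixes \<epsilon> :: real and k n m :: nat and E :: "(nat \<times> nat) set"
  assumes "0 < \<epsilon>" and "\<epsilon> \<le> 1"
    and "bip_expander \<epsilon> n m E"
    and "d_monotone k E"
  shows "two_sided_bip_expander \<epsilon> n m (symmetrise E) \<and> d_monotone (2 * k) (symmetrise E)"
  using two_sided_bip_expander_symmetrise[OF assms(3)] d_monotone_symmetrise[OF assms(4)] ..

end
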